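(* For every integer $d\ge3$, the set $\mathfrak P_d$ is contained in $[0,2d-4]^{2d-4}\times[-d+2,d-2]$; hence $\mathfrak P_d$ is a bounded convex polytope and $\mathfrak P_d\cap\mathbb Z^{2d-3}$ is finite.
   Context: $\mathfrak P_d\subseteq\mathbb R^{2d-3}$ is the set of all $(x_1,\dots,x_{d-2},y_1,\dots,y_{d-2},z)\in\mathbb R^{2d-3}$ satisfying: $x_j-x_{j+1}\ge0$ and $y_j-y_{j+1}\ge0$ for $j\in\{1,\dots,d-3\}$; $x_j\ge0$, $y_j\ge0$ for $j\in\{1,\dots,d-2\}$; $j(z+d-1-j)+\sum_{i=0}^{j-2}x_{d-2-i}-\sum_{i=1}^{j}y_i\ge0$ for $j\in\{1,\dots,d-2\}$; and $\sum_{i=1}^{d-2}y_i-\sum_{i=1}^{d-2}x_i=z(d-1)$. *)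

theory Defs
  imports "HOL-Analysis.Analysis"
begin

text \<open>Points of R^(2d-3) are modelled as vectors p :: real^'n, where the finite index
type 'n is ordered by a bijection e from {0..<2d-3}. Coordinate k (0-based) is p $ e k.
Thus x_j = p $ e (j-1) (1 <= j <= d-2), y_j = p $ e (d-3+j), z = p $ e (2d-4).\<close>

definition xc :: "nat \<Rightarrow> (nat \<Rightarrow> 'n) \<Rightarrow> real^'n \<Rightarrow> nat \<Rightarrow> real" where
  "xc d e p j = p $ e (j - 1)"

definition yc :: "nat \<Rightarrow> (nat \<Rightarrow> 'n) \<Rightarrow> real^'n \<Rightarrow> nat \<Rightarrow> real" where
  "yc d e p j = p $ e (d - 3 + j)"

definition zc :: "nat \<Rightarrow> (nat \<Rightarrow> 'n) \<Rightarrow> real^'n \<Rightarrow> real" where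
  "zc d e p = p $ e (2 * d - 4)"

definition Pd :: "nat \<Rightarrow> (nat \<Rightarrow> 'n::finite) \<Rightarrow> (real^'n) set" where
  "Pd d e = {p.
     (\<forall>j\<in>{1..d-3}. xc d e p j - xc d e p (j+1) \<ge> 0 \<and> yc d e p j - yc d e p (j+1) \<ge> 0) \<and>
     (\<forall>j\<in>{1..d-2}. xc d e p j \<ge> 0 \<and> yc d e p j \<ge> 0) \<and>
     (\<forall>j\<in>{1..d-2}. real j * (zc d e p + real d - 1 - real j)
          + (\<Sum>i\<in>{0..<j-1}. xc d e p (d - 2 - i)) - (\<Sum>i\<in>{1..j}. yc d e p i) \<ge> 0) \<and>
     (\<Sum>i\<in>{1..d-2}. yc d e p i) - (\<Sum>i\<in>{1..d-2}. xc d e p i) = zc d e p * (real d - 1)}"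

end

theory Submission
  imports Defs
begin

text \<open>The inequality for \<open>j = 1\<close> gives \<open>y\<^sub>1 \<le> z + d - 2\<close>, and the one for
\<open>j = d - 2\<close>, after eliminating \<open>\<Sum> y\<^sub>i\<close> with the linear equation, gives
\<open>x\<^sub>1 \<le> d - 2 - z\<close>. As \<open>x\<^sub>1, y\<^sub>1 \<ge> 0\<close>, this confines \<open>z\<close> to \<open>[2 - d, d - 2]\<close>
and \<open>x\<^sub>1, y\<^sub>1\<close> to \<open>[0, 2d - 4]\<close>; since both sequences are non-increasing and
non-negative, every coordinate lies in the box.\<close>

lemma polyhedron_linear_ge:
  fixes f :: "'a::euclidean_space \<Rightarrow> real"
  assumes "linear f"
  shows "polyhedron {x. c \<le> f x}"
  using polyhedron_halfspace_ge[of c "adjoint f 1"] adjoint_clauses(2)[OF assms, of 1] by simp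

lemma polyhedron_linear_eq:
  fixes f :: "'a::euclidean_space \<Rightarrow> real"
  assumes "linear f"
  shows "polyhedron {x. f x = c}"
  using polyhedron_hyperplane[of "adjoint f 1" c] adjoint_clauses(2)[OF assms, of 1] by simp

lemma polyhedron_Ball_linear_ge:
  fixes f :: "'i \<Rightarrow> 'a::euclidean_space \<Rightarrow> real"
  assumes "finite J" and "\<And>j. j \<in> J \<Longrightarrow> linear (f j)"
  shows "polyhedron {x. \<forall>j\<in>J. c j \<le> f j x}"
proof -
  have "{x. \<forall>j\<in>J. c j \<le> f j x} = (\<Inter>j\<in>J. {x. c j \<le> f j x})" by auto
  then show ?thesis using assms by (auto intro!: polyhedron_Inter polyhedron_linear_ge)
qed

lemma antimono_on_interval_le_first:
  fixes f :: "nat \<Rightarrow> 'a::order"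
  assumes "\<And>k. m \<le> k \<Longrightarrow> k < n \<Longrightarrow> f (Suc k) \<le> f k" and "m \<le> j" and "j \<le> n"
  shows "f j \<le> f m"
  using assms(2,3)
proof (induction j rule: dec_induct)
  case (step k)
  then show ?case using assms(1)[of k] by (auto intro: order_trans)
qed simp

lemma bounded_if_components_bounded_cart:
  fixes S :: "(real^'n) set"
  assumes "\<And>p i. p \<in> S \<Longrightarrow> \<bar>p $ i\<bar> \<le> M"
  shows "bounded S"
proof -
  have "norm p \<le> real CARD('n) * M" if "p \<in> S" for p
    using norm_le_l1_cart[of p] sum_bounded_above[of UNIV "\<lambda>i. \<bar>p $ i\<bar>" M] assms[OF that]
    by simp
  then show ?thesis unfolding bounded_iff by blast
qed

lemma finite_bounded_integer_points_cart:
  fixes S :: "(real^'n) set"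
  assumes "bounded S"
  shows "finite (S \<inter> {p. \<forall>i. p $ i \<in> \<int>})"
proof -
  obtain r where r: "\<And>p. p \<in> S \<Longrightarrow> norm p \<le> r"
    using assms unfolding bounded_iff by blast
  define R where "R = {k \<in> \<int>. \<bar>k\<bar> \<le> r}"
  have "S \<inter> {p. \<forall>i. p $ i \<in> \<int>} \<subseteq> vec_lambda ` (UNIV \<rightarrow>\<^sub>E R)"
  proof
    fix p assume p: "p \<in> S \<inter> {p. \<forall>i. p $ i \<in> \<int>}"
    then have "vec_nth p \<in> UNIV \<rightarrow>\<^sub>E R"
      unfolding R_def using r component_le_norm_cart order_trans by fastforce
    then show "p \<in> vec_lambda ` (UNIV \<rightarrow>\<^sub>E R)"
      using image_eqI[of p vec_lambda "vec_nth p"] by simp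
  qed
  moreover have "finite (vec_lambda ` (UNIV \<rightarrow>\<^sub>E R))"
    unfolding R_def by (intro finite_imageI finite_PiE finite_abs_int_segment) auto
  ultimately show ?thesis by (rule finite_subset)
qed

lemma polyhedron_Pd: "polyhedron (Pd d e)"
proof -
  have "Pd d e =
      {p. \<forall>j\<in>{1..d-3}. 0 \<le> xc d e p j - xc d e p (j+1)} \<inter>
      {p. \<forall>j\<in>{1..d-3}. 0 \<le> yc d e p j - yc d e p (j+1)} \<inter>
      {p. \<forall>j\<in>{1..d-2}. 0 \<le> xc d e p j} \<inter>
      {p. \<forall>j\<in>{1..d-2}. 0 \<le> yc d e p j} \<inter>
      {p. \<forall>j\<in>{1..d-2}. - real j * (real d - 1 - real j) \<le>
            real j * zc d e p + (\<Sum>i\<in>{0..<j-1}. xc d e p (d - 2 - i)) - (\<Sum>i\<in>{1..j}. yc d e p i)} \<inter>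
      {p. (\<Sum>i\<in>{1..d-2}. yc d e p i) - (\<Sum>i\<in>{1..d-2}. xc d e p i) - zc d e p * (real d - 1) = 0}"
    unfolding Pd_def by (auto simp: algebra_simps)
  moreover have "bounded_linear (\<lambda>p. xc d e p j)" "bounded_linear (\<lambda>p. yc d e p j)"
    "bounded_linear (\<lambda>p. zc d e p)" for j
    unfolding xc_def yc_def zc_def by (rule bounded_linear_vec_nth)+
  ultimately show ?thesis
    by (simp only:) (intro polyhedron_Int polyhedron_Ball_linear_ge polyhedron_linear_eq
        finite_atLeastAtMost bounded_linear.linear bounded_linear_sub bounded_linear_add
        bounded_linear_sum bounded_linear_const_mult bounded_linear_mult_const; assumption)
qed

lemma Pd_first_coordinates_bounds:
  assumes d: "d \<ge> 3" and p: "p \<in> Pd d e"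
  shows "yc d e p 1 \<le> zc d e p + real d - 2" and "xc d e p 1 \<le> real d - 2 - zc d e p"
proof -
  let ?x = "xc d e p" and ?y = "yc d e p" and ?z = "zc d e p"
  have ineq: "0 \<le> real j * (?z + real d - 1 - real j)
      + (\<Sum>i\<in>{0..<j-1}. ?x (d - 2 - i)) - (\<Sum>i\<in>{1..j}. ?y i)" if "j \<in> {1..d-2}" for j
    using p that unfolding Pd_def by blast
  have balance: "(\<Sum>i\<in>{1..d-2}. ?y i) - (\<Sum>i\<in>{1..d-2}. ?x i) = ?z * (real d - 1)"
    using p unfolding Pd_def by blast
  show "?y 1 \<le> ?z + real d - 2"
    using ineq[of 1] d by simp
  have "(\<Sum>i\<in>{0..<d-3}. ?x (d - 2 - i)) = (\<Sum>k\<in>{2..d-2}. ?x k)"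
    by (rule sum.reindex_bij_witness[of _ "\<lambda>k. d - 2 - k" "\<lambda>i. d - 2 - i"]) auto
  also have "\<dots> = (\<Sum>i\<in>{1..d-2}. ?x i) - ?x 1"
    using d by (simp add: sum.atLeast_Suc_atMost numeral_eq_Suc)
  finally have "0 \<le> real (d-2) * (?z + real d - 1 - real (d-2))
      + ((\<Sum>i\<in>{1..d-2}. ?x i) - ?x 1) - (\<Sum>i\<in>{1..d-2}. ?y i)"
    using ineq[of "d-2"] d by (simp add: diff_diff_left)
  then show "?x 1 \<le> real d - 2 - ?z"
    using balance d by (simp add: of_nat_diff algebra_simps)
qed

lemma Pd_subset_box:
  assumes d: "d \<ge> 3"
  shows "Pd d e \<subseteq> {p. (\<forall>k<2*d-4. 0 \<le> p $ e k \<and> p $ e k \<le> 2 * real d - 4) \<and>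
                          - real d + 2 \<le> p $ e (2*d-4) \<and> p $ e (2*d-4) \<le> real d - 2}"
proof
  fix p assume p: "p \<in> Pd d e"
  let ?x = "xc d e p" and ?y = "yc d e p" and ?z = "zc d e p"
  have nonneg: "0 \<le> ?x j" "0 \<le> ?y j" if "j \<in> {1..d-2}" for j
    using p that unfolding Pd_def by blast+
  have step: "?x (Suc k) \<le> ?x k" "?y (Suc k) \<le> ?y k" if "1 \<le> k" "k < d - 2" for k
    using p that unfolding Pd_def by auto
  have x_le: "?x j \<le> ?x 1" and y_le: "?y j \<le> ?y 1" if "j \<in> {1..d-2}" for j
    using that step by (auto intro: antimono_on_interval_le_first[where n = "d-2"])
  have y1: "?y 1 \<le> ?z + real d - 2" and x1: "?x 1 \<le> real d - 2 - ?z"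
    using Pd_first_coordinates_bounds[OF d p] by auto
  moreover have "0 \<le> ?x 1" "0 \<le> ?y 1"
    using nonneg[of 1] d by auto
  ultimately have z: "- real d + 2 \<le> ?z" "?z \<le> real d - 2"
    by linarith+
  have x_box: "0 \<le> ?x j \<and> ?x j \<le> 2 * real d - 4"
    and y_box: "0 \<le> ?y j \<and> ?y j \<le> 2 * real d - 4" if "j \<in> {1..d-2}" for j
    using nonneg[OF that] x_le[OF that] y_le[OF that] x1 y1 z by auto
  have "\<forall>k<2*d-4. 0 \<le> p $ e k \<and> p $ e k \<le> 2 * real d - 4"
  proof (intro allI impI)
    fix k assume k: "k < 2*d-4"
    show "0 \<le> p $ e k \<and> p $ e k \<le> 2 * real d - 4"
    proof (cases "k < d - 2")
      case True
      then show ?thesis using x_box[of "k+1"] by (simp add: xc_def)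
    next
      case False
      then have "p $ e k = ?y (k+3-d)" "k + 3 - d \<in> {1..d-2}"
        using k d by (auto simp: yc_def)
      then show ?thesis using y_box by simp
    qed
  qed
  with z show "p \<in> {p. (\<forall>k<2*d-4. 0 \<le> p $ e k \<and> p $ e k \<le> 2 * real d - 4) \<and>
                          - real d + 2 \<le> p $ e (2*d-4) \<and> p $ e (2*d-4) \<le> real d - 2}"
    unfolding zc_def by simp
qed

theorem corollary5p15:
  fixes d :: nat and e :: "nat \<Rightarrow> 'n::finite"
  assumes "d \<ge> 3" and "bij_betw e {0..<2*d-3} (UNIV :: 'n set)"
  shows "Pd d e \<subseteq> {p. (\<forall>k<2*d-4. 0 \<le> p $ e k \<and> p $ e k \<le> 2 * real d - 4) \<and>
                          - real d + 2 \<le> p $ e (2*d-4) \<and> p $ e (2*d-4) \<le> real d - 2}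
         \<and> bounded (Pd d e) \<and> convex (Pd d e) \<and> polytope (Pd d e)
         \<and> finite (Pd d e \<inter> {p. \<forall>i. p $ i \<in> \<int>})"
proof -
  note box = Pd_subset_box[OF assms(1)]
  have "\<bar>p $ i\<bar> \<le> 2 * real d" if "p \<in> Pd d e" for p i
  proof -
    have "i \<in> e ` {0..<2*d-3}"
      using assms(2) by (simp add: bij_betw_def)
    then obtain k where k: "k < 2*d-3" and i: "i = e k"
      by auto
    from k consider "k < 2*d-4" | "k = 2*d-4"
      using assms(1) by linarith
    then show ?thesis
      using box that unfolding i by cases fastforce+
  qed
  then have bounded: "bounded (Pd d e)"
    by (rule bounded_if_components_bounded_cart)
  moreover have "polytope (Pd d e)"
    using bounded polyhedron_Pd polytope_eq_bounded_polyhedron by blast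
  ultimately show ?thesis
    using box polyhedron_imp_convex[OF polyhedron_Pd] finite_bounded_integer_points_cart[OF bounded]
    by blast
qed

end
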